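(* Let $Z$ be a compact Hausdorff space containing (as a subspace) a homeomorphic copy of the one-point compactification $\Delta^+=\Delta\sqcup\{\infty\}$ of an uncountable discrete space $\Delta$, and let $n\ge 3$ be an integer. Set $X:=Z_{[n]}$, $Y:=Z_{[n]}^{\subseteq}$ and let $\pi:Y\to X$ be the second projection $(z,x)\mapsto x$. Then the unital embedding $\pi^*:C(X)\hookrightarrow C(Y)$, $f\mapsto f\circ\pi$, admits no conditional expectation $C(Y)\to \pi^*C(X)$; in particular it is not a quantum (non-commutative) branched cover.
   Context: $Z_{[n]}:=\{\mathbf z\subseteq Z:\ 1\le|\mathbf z|\le n\}$ carries the quotient topology from $Z^n$ via $(z_i)_i\mapsto\{z_i\}_i$ (equivalently, the Vietoris topology); $Z_{[n]}^{\subseteq}:=\{(z,x)\in Z\times Z_{[n]}:\ z\in x\}$. A conditional expectation for a unital $C^*$-subalgebra $A\le B$ is a norm-one idempotent linear map $E:B\to B$ with range $A$ (equivalently a unital completely positive $A$-bimodule projection onto $A$). A unital embedding $A\le B$ is a quantum branched cover if it admits a conditional expectation $E$ of finite index, i.e. there is $K\ge1$ with $KE(b^*b)\ge b^*b$ for all $b\in B$. *)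

theory Defs
  imports "HOL-Analysis.Analysis"
begin

definition quotient_top :: "'a topology \<Rightarrow> ('a \<Rightarrow> 'b) \<Rightarrow> 'b topology" where
  "quotient_top P q = topology (\<lambda>U. U \<subseteq> q ` topspace P \<and> openin P {x \<in> topspace P. q x \<in> U})"

lemma istopology_quotient:
  "istopology (\<lambda>U. U \<subseteq> q ` topspace P \<and> openin P {x \<in> topspace P. q x \<in> U})"
proof -
  have int: "{x \<in> topspace P. q x \<in> S \<inter> T} = {x \<in> topspace P. q x \<in> S} \<inter> {x \<in> topspace P. q x \<in> T}"
    for S T by auto
  have un: "{x \<in> topspace P. q x \<in> \<Union>K} = (\<Union>U\<in>K. {x \<in> topspace P. q x \<in> U})" for K by auto
  show ?thesis unfolding istopology_def
    apply (intro conjI allI impI)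
       apply blast
      apply (subst int, blast intro: openin_Int)
     apply blast
    apply (subst un, auto intro!: openin_Union)
    done
qed

lemma openin_quotient_top:
  "openin (quotient_top P q) U \<longleftrightarrow> U \<subseteq> q ` topspace P \<and> openin P {x \<in> topspace P. q x \<in> U}"
  unfolding quotient_top_def by (simp add: topology_inverse' istopology_quotient)

text \<open>Z_[n]: nonempty subsets of Z with at most n points, with the quotient topology
  from Z^n via (z_i)_i maps to the set of the z_i.\<close>

definition fin_subsets_top :: "'a topology \<Rightarrow> nat \<Rightarrow> 'a set topology" where
  "fin_subsets_top Z n = quotient_top (product_topology (\<lambda>i. Z) {..<n}) (\<lambda>f. f ` {..<n})"

definition incl_top :: "'a topology \<Rightarrow> nat \<Rightarrow> ('a \<times> 'a set) topology" where
  "incl_top Z n = subtopology (prod_topology Z (fin_subsets_top Z n)) {(z, x). z \<in> x}"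

definition onepoint_discrete :: "'d set \<Rightarrow> 'd option topology" where
  "onepoint_discrete D = topology (\<lambda>U. U \<subseteq> insert None (Some ` D) \<and>
       (None \<in> U \<longrightarrow> finite {d \<in> D. Some d \<notin> U}))"

lemma istopology_onepoint_discrete:
  "istopology (\<lambda>U. U \<subseteq> insert None (Some ` D) \<and> (None \<in> U \<longrightarrow> finite {d \<in> D. Some d \<notin> U}))"
  unfolding istopology_def
proof (rule conjI; intro allI impI)
  fix S T assume S: "S \<subseteq> insert None (Some ` D) \<and> (None \<in> S \<longrightarrow> finite {d \<in> D. Some d \<notin> S})"
    and T: "T \<subseteq> insert None (Some ` D) \<and> (None \<in> T \<longrightarrow> finite {d \<in> D. Some d \<notin> T})"
  have "{d \<in> D. Some d \<notin> S \<inter> T} = {d \<in> D. Some d \<notin> S} \<union> {d \<in> D. Some d \<notin> T}" by auto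
  then show "S \<inter> T \<subseteq> insert None (Some ` D) \<and> (None \<in> S \<inter> T \<longrightarrow> finite {d \<in> D. Some d \<notin> S \<inter> T})"
    using S T by auto
next
  fix K assume K: "\<forall>U\<in>K. U \<subseteq> insert None (Some ` D) \<and> (None \<in> U \<longrightarrow> finite {d \<in> D. Some d \<notin> U})"
  show "\<Union>K \<subseteq> insert None (Some ` D) \<and> (None \<in> \<Union>K \<longrightarrow> finite {d \<in> D. Some d \<notin> \<Union>K})"
  proof (intro conjI impI)
    show "\<Union>K \<subseteq> insert None (Some ` D)" using K by blast
  next
    assume "None \<in> \<Union>K"
    then obtain U where U: "U \<in> K" "None \<in> U" by blast
    then have "finite {d \<in> D. Some d \<notin> U}" using K by blast
    then show "finite {d \<in> D. Some d \<notin> \<Union>K}"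
      by (rule finite_subset[rotated]) (use U in blast)
  qed
qed

text \<open>C(Y): continuous complex-valued functions on the space Y, normalised to 0 off topspace.\<close>

definition cfun :: "'y topology \<Rightarrow> ('y \<Rightarrow> complex) set" where
  "cfun Y = {g. continuous_map Y euclidean g \<and> (\<forall>p. p \<notin> topspace Y \<longrightarrow> g p = 0)}"

definition supnorm :: "'y topology \<Rightarrow> ('y \<Rightarrow> complex) \<Rightarrow> real" where
  "supnorm Y g = Sup ((\<lambda>p. cmod (g p)) ` topspace Y)"

definition pullback_alg :: "'y topology \<Rightarrow> 'x topology \<Rightarrow> ('y \<Rightarrow> 'x) \<Rightarrow> ('y \<Rightarrow> complex) set" where
  "pullback_alg Y X \<pi> = {(\<lambda>p. if p \<in> topspace Y then f (\<pi> p) else 0) | f. f \<in> cfun X}"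

definition cond_exp :: "'y topology \<Rightarrow> ('y \<Rightarrow> complex) set \<Rightarrow> (('y \<Rightarrow> complex) \<Rightarrow> ('y \<Rightarrow> complex)) \<Rightarrow> bool" where
  "cond_exp Y A E \<longleftrightarrow>
     (\<forall>g \<in> cfun Y. \<forall>h \<in> cfun Y. E (\<lambda>p. g p + h p) = (\<lambda>p. E g p + E h p)) \<and>
     (\<forall>g \<in> cfun Y. \<forall>c::complex. E (\<lambda>p. c * g p) = (\<lambda>p. c * E g p)) \<and>
     (\<forall>g \<in> cfun Y. E (E g) = E g) \<and>
     E ` cfun Y = A \<and>
     bdd_above ((\<lambda>g. supnorm Y (E g)) ` {g \<in> cfun Y. supnorm Y g \<le> 1}) \<and>
     Sup ((\<lambda>g. supnorm Y (E g)) ` {g \<in> cfun Y. supnorm Y g \<le> 1}) = 1"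

text \<open>Quantum branched cover: A <= C(Y) admits a conditional expectation of finite index.\<close>

definition quantum_branched_cover :: "'y topology \<Rightarrow> ('y \<Rightarrow> complex) set \<Rightarrow> bool" where
  "quantum_branched_cover Y A \<longleftrightarrow>
     (\<exists>E K. cond_exp Y A E \<and> K \<ge> (1::real) \<and>
        (\<forall>b \<in> cfun Y. \<forall>p \<in> topspace Y.
           let bb = (\<lambda>q. cnj (b q) * b q); d = of_real K * E bb p - bb p
           in Im d = 0 \<and> Re d \<ge> 0))"

end

theory Submission
  imports Defs
begin

text \<open>Suppose \<open>E\<close> were a conditional expectation onto \<open>\<pi>\<^sup>*C(X)\<close>. Being a contractive projection,
  \<open>E\<close> is local: \<open>|E(h \<circ> fst)(z, x)|\<close> is at most the maximum of \<open>|h|\<close> on the finite set \<open>x\<close>.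
  Let \<open>t\<^sub>d \<rightarrow> \<omega>\<close> be the embedded copy of \<open>\<Delta>\<^sup>+\<close>, choose Urysohn functions \<open>h\<^sub>d\<close> with
  \<open>h\<^sub>d(t\<^sub>d) = 1\<close>, \<open>h\<^sub>d(\<omega>) = 0\<close>, and put \<open>p\<^sub>d = E(h\<^sub>d \<circ> fst)(t\<^sub>d, {t\<^sub>d, \<omega>})\<close>. Continuity of
  \<open>E(h\<^sub>d \<circ> fst)\<close> in the configuration \<open>{t\<^sub>d, u, v}\<close> (here \<open>n \<ge> 3\<close> is used) shows that for all but
  finitely many \<open>b, c\<close> the value at \<open>(t\<^sub>d, {t\<^sub>d, t\<^sub>b, t\<^sub>c})\<close> is close to \<open>p\<^sub>d\<close> and \<open>h\<^sub>d(t\<^sub>b)\<close> is small.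
  Since \<open>\<Delta>\<close> is uncountable there are \<open>a, b, c\<close> none of which is exceptional for another. As
  \<open>E\<close> is constant on fibres of \<open>\<pi>\<close> and \<open>E 1 = 1\<close>, locality applied to \<open>\<Sum> h\<^sub>d - 1\<close> on \<open>{t\<^sub>a, t\<^sub>b}\<close>,
  \<open>{t\<^sub>b, t\<^sub>c}\<close>, \<open>{t\<^sub>a, t\<^sub>c}\<close> and \<open>{t\<^sub>a, t\<^sub>b, t\<^sub>c}\<close> makes all of \<open>p\<^sub>a + p\<^sub>b\<close>, \<open>p\<^sub>b + p\<^sub>c\<close>, \<open>p\<^sub>a + p\<^sub>c\<close> and
  \<open>p\<^sub>a + p\<^sub>b + p\<^sub>c\<close> close to \<open>1\<close>, which is impossible.\<close>

section \<open>Quotient topology and the space of finite subsets\<close>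

lemma topspace_quotient_top: "topspace (quotient_top P q) = q ` topspace P"
proof -
  have "openin (quotient_top P q) (q ` topspace P)"
    unfolding openin_quotient_top by (auto intro: openin_subopen[THEN iffD2])
  moreover have "\<And>U. openin (quotient_top P q) U \<Longrightarrow> U \<subseteq> q ` topspace P"
    unfolding openin_quotient_top by blast
  ultimately show ?thesis
    by (meson openin_subset openin_topspace subset_antisym)
qed

lemma continuous_map_quotient_top: "continuous_map P (quotient_top P q) q"
  unfolding continuous_map_def topspace_quotient_top openin_quotient_top by auto

lemma continuous_map_from_quotient_top:
  assumes "continuous_map P T (\<lambda>x. f (q x))"
  shows "continuous_map (quotient_top P q) T f"
  unfolding continuous_map_def topspace_quotient_top
proof (intro conjI allI impI)
  show "f \<in> q ` topspace P \<rightarrow> topspace T"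
    using assms by (auto simp: continuous_map_def)
next
  fix U assume "openin T U"
  moreover have "{x \<in> topspace P. q x \<in> {y \<in> q ` topspace P. f y \<in> U}} = {x \<in> topspace P. f (q x) \<in> U}"
    by auto
  ultimately show "openin (quotient_top P q) {x \<in> q ` topspace P. f x \<in> U}"
    unfolding openin_quotient_top using assms by (auto simp: continuous_map_def)
qed

lemma topspace_fin_subsets_top:
  "topspace (fin_subsets_top Z n) = (\<lambda>f. f ` {..<n}) ` (\<Pi>\<^sub>E i\<in>{..<n}. topspace Z)"
  unfolding fin_subsets_top_def topspace_quotient_top by simp

lemma fin_subsets_topD:
  assumes "x \<in> topspace (fin_subsets_top Z n)"
  shows "x \<subseteq> topspace Z" "finite x" "0 < n \<Longrightarrow> x \<noteq> {}"
  using assms unfolding topspace_fin_subsets_top by auto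

lemma image_in_fin_subsets_top:
  assumes "\<And>i. i < n \<Longrightarrow> g i \<in> topspace Z"
  shows "g ` {..<n} \<in> topspace (fin_subsets_top Z n)"
proof -
  have "restrict g {..<n} \<in> (\<Pi>\<^sub>E i\<in>{..<n}. topspace Z)" and "restrict g {..<n} ` {..<n} = g ` {..<n}"
    using assms by auto
  then show ?thesis
    unfolding topspace_fin_subsets_top by (metis image_eqI)
qed

lemma in_fin_subsets_top:
  assumes "finite x" "x \<noteq> {}" "x \<subseteq> topspace Z" "card x \<le> n"
  shows "x \<in> topspace (fin_subsets_top Z n)"
proof -
  obtain e where e: "bij_betw e {..<card x} x"
    using ex_bij_betw_nat_finite[OF assms(1)] by (auto simp: lessThan_atLeast0)
  obtain z where z: "z \<in> x" using assms(2) by blast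
  define g where "g i = (if i < card x then e i else z)" for i
  have "g ` {..<n} = x"
  proof
    show "g ` {..<n} \<subseteq> x"
      using e z by (auto simp: g_def bij_betw_def)
    show "x \<subseteq> g ` {..<n}"
    proof
      fix y assume "y \<in> x"
      then obtain i where "i < card x" "y = e i"
        using e by (auto simp: bij_betw_def)
      then show "y \<in> g ` {..<n}"
        using assms(4) by (auto simp: g_def intro!: image_eqI[of _ _ i])
    qed
  qed
  moreover have "g ` {..<n} \<in> topspace (fin_subsets_top Z n)"
    using e z assms(3) by (intro image_in_fin_subsets_top) (auto simp: g_def bij_betw_def)
  ultimately show ?thesis by simp
qed

lemma continuous_map_insert_pair_fin_subsets_top:
  assumes "3 \<le> n" "u0 \<in> topspace Z"
  shows "continuous_map (prod_topology Z Z) (fin_subsets_top Z n) (\<lambda>(u, v). {u0, u, v})"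
proof -
  define \<zeta> where "\<zeta> w = (\<lambda>i\<in>{..<n}. if i = 0 then u0 else if i = 1 then fst w else snd w)" for w
  have image_\<zeta>: "\<zeta> w ` {..<n} = {u0, fst w, snd w}" for w
  proof -
    have "{0, 1, 2} \<subseteq> {..<n}" using assms(1) by auto
    then show ?thesis
      by (auto simp: \<zeta>_def image_iff)
  qed
  have "continuous_map (prod_topology Z Z) (product_topology (\<lambda>i. Z) {..<n}) \<zeta>"
    unfolding continuous_map_componentwise
    using assms(2) by (auto simp: \<zeta>_def continuous_map_fst continuous_map_snd)
  then have "continuous_map (prod_topology Z Z) (fin_subsets_top Z n) (\<lambda>w. \<zeta> w ` {..<n})"
    unfolding fin_subsets_top_def
    using continuous_map_compose[OF _ continuous_map_quotient_top] by (simp add: o_def)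
  then show ?thesis
    by (rule continuous_map_eq) (auto simp: image_\<zeta>)
qed

lemma compact_space_fin_subsets_top:
  assumes "compact_space Z"
  shows "compact_space (fin_subsets_top Z n)"
proof -
  have "compact_space (product_topology (\<lambda>i. Z) {..<n})"
    using assms compact_space_product_topology by blast
  then show ?thesis
    unfolding fin_subsets_top_def compact_space_def topspace_quotient_top
    by (metis image_compactin continuous_map_quotient_top)
qed

lemma continuous_map_Min:
  fixes F :: "'x \<Rightarrow> 'i \<Rightarrow> real"
  assumes "finite I" "I \<noteq> {}" "\<And>i. i \<in> I \<Longrightarrow> continuous_map X euclideanreal (\<lambda>x. F x i)"
  shows "continuous_map X euclideanreal (\<lambda>x. Min (F x ` I))"
  using assms by (induction I rule: finite_ne_induct) (auto intro: continuous_map_real_min)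

lemma continuous_map_Min_fin_subsets_top:
  assumes "0 < n" "continuous_map Z euclideanreal \<psi>"
  shows "continuous_map (fin_subsets_top Z n) euclideanreal (\<lambda>x. Min (\<psi> ` x))"
  unfolding fin_subsets_top_def
proof (rule continuous_map_from_quotient_top)
  have "continuous_map (product_topology (\<lambda>i. Z) {..<n}) euclideanreal (\<lambda>g. Min ((\<lambda>i. \<psi> (g i)) ` {..<n}))"
    using assms continuous_map_compose[OF continuous_map_product_projection[of _ "{..<n}" "\<lambda>i. Z"] assms(2)]
    by (intro continuous_map_Min) (auto simp: o_def)
  then show "continuous_map (product_topology (\<lambda>i. Z) {..<n}) euclideanreal (\<lambda>g. Min (\<psi> ` g ` {..<n}))"
    by (simp add: image_image)
qed

lemma fin_subsets_top_bump:
  fixes h :: "'a \<Rightarrow> 'b::real_normed_vector"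
  assumes "0 < n" "continuous_map Z euclidean h" "x \<in> topspace (fin_subsets_top Z n)"
    and "\<And>z. z \<in> x \<Longrightarrow> norm (h z) < \<delta>"
  obtains \<phi> where "continuous_map (fin_subsets_top Z n) euclideanreal \<phi>"
    "\<And>x'. x' \<in> topspace (fin_subsets_top Z n) \<Longrightarrow> 0 \<le> \<phi> x' \<and> \<phi> x' \<le> 1" "\<phi> x = 1"
    "\<And>x' z. x' \<in> topspace (fin_subsets_top Z n) \<Longrightarrow> 0 < \<phi> x' \<Longrightarrow> z \<in> x' \<Longrightarrow> norm (h z) < \<delta>"
proof -
  have fin: "finite x" "x \<noteq> {}"
    using fin_subsets_topD[OF assms(3)] assms(1) by auto
  define m where "m = Max ((\<lambda>z. norm (h z)) ` x)"
  have "m < \<delta>" and h_le_m: "\<And>z. z \<in> x \<Longrightarrow> norm (h z) \<le> m"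
    using assms(4) fin by (auto simp: m_def)
  define \<psi> where "\<psi> z = min 1 (max 0 ((\<delta> - norm (h z)) / (\<delta> - m)))" for z
  have \<psi>_cont: "continuous_map Z euclideanreal \<psi>"
    unfolding \<psi>_def using \<open>m < \<delta>\<close>
    by (intro continuous_map_real_min continuous_map_real_max continuous_map_real_divide
        continuous_map_diff continuous_map_norm assms(2) continuous_map_canonical_const) auto
  have \<psi>_range: "0 \<le> \<psi> z" "\<psi> z \<le> 1" for z
    by (auto simp: \<psi>_def)
  have \<psi>_pos: "norm (h z) < \<delta>" if "0 < \<psi> z" for z
  proof (rule ccontr)
    assume "\<not> norm (h z) < \<delta>"
    then have "(\<delta> - norm (h z)) / (\<delta> - m) \<le> 0"
      using \<open>m < \<delta>\<close> by (simp add: divide_nonpos_pos)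
    then show False
      using that by (simp add: \<psi>_def)
  qed
  show ?thesis
  proof (rule that[of "\<lambda>x'. Min (\<psi> ` x')"])
    show "continuous_map (fin_subsets_top Z n) euclideanreal (\<lambda>x'. Min (\<psi> ` x'))"
      by (rule continuous_map_Min_fin_subsets_top[OF assms(1) \<psi>_cont])
    show "0 \<le> Min (\<psi> ` x') \<and> Min (\<psi> ` x') \<le> 1" if "x' \<in> topspace (fin_subsets_top Z n)" for x'
      using fin_subsets_topD[OF that] assms(1) \<psi>_range by (auto simp: Min_le_iff)
    have "\<psi> z = 1" if "z \<in> x" for z
      using \<open>m < \<delta>\<close> h_le_m[OF that] by (simp add: \<psi>_def)
    then show "Min (\<psi> ` x) = 1"
      using fin by (simp cong: image_cong)
    show "norm (h z) < \<delta>" if "x' \<in> topspace (fin_subsets_top Z n)" "0 < Min (\<psi> ` x')" "z \<in> x'" for x' z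
    proof -
      have "Min (\<psi> ` x') \<le> \<psi> z"
        using fin_subsets_topD(2)[OF that(1)] that(3) by (intro Min_le) auto
      then show ?thesis
        using that(2) \<psi>_pos by simp
    qed
  qed
qed

lemma topspace_incl_top:
  "topspace (incl_top Z n) = {(z, x). z \<in> topspace Z \<and> x \<in> topspace (fin_subsets_top Z n) \<and> z \<in> x}"
  unfolding incl_top_def by auto

lemma continuous_map_fst_incl_top: "continuous_map (incl_top Z n) Z fst"
  unfolding incl_top_def by (intro continuous_map_from_subtopology continuous_map_fst)

lemma continuous_map_snd_incl_top: "continuous_map (incl_top Z n) (fin_subsets_top Z n) snd"
  unfolding incl_top_def by (intro continuous_map_from_subtopology continuous_map_snd)

lemma cfun_add: "g \<in> cfun Y \<Longrightarrow> h \<in> cfun Y \<Longrightarrow> (\<lambda>p. g p + h p) \<in> cfun Y"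
  unfolding cfun_def by (auto intro: continuous_map_add)

lemma cfun_mult_const: "g \<in> cfun Y \<Longrightarrow> (\<lambda>p. c * g p) \<in> cfun Y"
  unfolding cfun_def by (auto simp: continuous_map_atin tendsto_mult)

lemma continuous_map_of_real:
  "continuous_map X euclideanreal f \<Longrightarrow> continuous_map X euclidean (\<lambda>x. of_real (f x) :: 'a::real_normed_algebra_1)"
  by (simp add: continuous_map_atin tendsto_of_real)

lemma compact_space_bounded_continuous:
  fixes h :: "'a \<Rightarrow> 'b::real_normed_vector"
  assumes "compact_space X" "continuous_map X euclidean h"
  obtains B where "0 < B" "\<And>x. x \<in> topspace X \<Longrightarrow> norm (h x) \<le> B"
proof -
  have "compactin euclidean (h ` topspace X)"
    using assms by (intro image_compactin) (auto simp: compact_space_def)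
  then show ?thesis
    using that compact_imp_bounded bounded_pos by (metis compactin_euclidean_iff image_eqI)
qed

definition pull_fst :: "('a \<times> 'b) topology \<Rightarrow> ('a \<Rightarrow> complex) \<Rightarrow> 'a \<times> 'b \<Rightarrow> complex" where
  "pull_fst Y h p = (if p \<in> topspace Y then h (fst p) else 0)"

definition pull_snd :: "('a \<times> 'b) topology \<Rightarrow> ('b \<Rightarrow> complex) \<Rightarrow> 'a \<times> 'b \<Rightarrow> complex" where
  "pull_snd Y f p = (if p \<in> topspace Y then f (snd p) else 0)"

lemma pullback_alg_snd: "pullback_alg Y X snd = pull_snd Y ` cfun X"
  unfolding pullback_alg_def pull_snd_def[abs_def] by blast

lemma pull_fst_cfun:
  assumes "continuous_map Z euclidean h"
  shows "pull_fst (incl_top Z n) h \<in> cfun (incl_top Z n)"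
  unfolding cfun_def pull_fst_def
  by (auto intro: continuous_map_eq[OF continuous_map_compose[OF continuous_map_fst_incl_top assms]])

lemma pull_snd_cfun:
  assumes "f \<in> cfun (fin_subsets_top Z n)"
  shows "pull_snd (incl_top Z n) f \<in> cfun (incl_top Z n)"
  using assms unfolding cfun_def pull_snd_def
  by (auto intro: continuous_map_eq[OF continuous_map_compose[OF continuous_map_snd_incl_top]])

lemma continuous_map_prod_near_diagonal:
  fixes \<Phi> :: "'a \<times> 'a \<Rightarrow> 'b::metric_space"
  assumes "continuous_map (prod_topology Z Z) euclidean \<Phi>" "w \<in> topspace Z" "0 < \<epsilon>"
  obtains W where "openin Z W" "w \<in> W" "\<And>u v. u \<in> W \<Longrightarrow> v \<in> W \<Longrightarrow> dist (\<Phi> (u, v)) (\<Phi> (w, w)) < \<epsilon>"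
proof -
  define N where "N = {q \<in> topspace (prod_topology Z Z). \<Phi> q \<in> ball (\<Phi> (w, w)) \<epsilon>}"
  have "openin (prod_topology Z Z) N"
    unfolding N_def using assms(1) by (rule openin_continuous_map_preimage) simp
  moreover have "(w, w) \<in> N"
    using assms(2,3) by (simp add: N_def)
  ultimately have "\<exists>U V. openin Z U \<and> openin Z V \<and> w \<in> U \<and> w \<in> V \<and> U \<times> V \<subseteq> N"
    using openin_prod_topology_alt by metis
  then obtain U V where UV: "openin Z U" "openin Z V" "w \<in> U" "w \<in> V" "U \<times> V \<subseteq> N"
    by blast
  have "dist (\<Phi> (u, v)) (\<Phi> (w, w)) < \<epsilon>" if "u \<in> U \<inter> V" "v \<in> U \<inter> V" for u v
  proof -
    have "(u, v) \<in> N"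
      using that UV(5) by blast
    then show ?thesis
      by (simp add: N_def dist_commute)
  qed
  moreover have "openin Z (U \<inter> V)"
    using UV(1,2) by (rule openin_Int)
  ultimately show ?thesis
    using that UV(3,4) by blast
qed

section \<open>The one-point compactification of a discrete space\<close>

lemma openin_onepoint_discrete:
  "openin (onepoint_discrete D) U \<longleftrightarrow>
     U \<subseteq> insert None (Some ` D) \<and> (None \<in> U \<longrightarrow> finite {d \<in> D. Some d \<notin> U})"
  unfolding onepoint_discrete_def by (simp add: topology_inverse' istopology_onepoint_discrete)

lemma topspace_onepoint_discrete: "topspace (onepoint_discrete D) = insert None (Some ` D)"
proof -
  have "{d \<in> D. Some d \<notin> insert None (Some ` D)} = {}"
    by auto
  then have "openin (onepoint_discrete D) (insert None (Some ` D))"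
    unfolding openin_onepoint_discrete by (metis finite.emptyI order_refl)
  moreover have "\<And>U. openin (onepoint_discrete D) U \<Longrightarrow> U \<subseteq> insert None (Some ` D)"
    unfolding openin_onepoint_discrete by blast
  ultimately show ?thesis
    by (meson openin_subset openin_topspace subset_antisym)
qed

lemma homeomorphic_onepoint_discreteE:
  assumes "subtopology Z S homeomorphic_space onepoint_discrete D"
  obtains t \<omega> where "\<omega> \<in> topspace Z" "t ` D \<subseteq> topspace Z" "\<omega> \<notin> t ` D"
    "\<And>V. openin Z V \<Longrightarrow> \<omega> \<in> V \<Longrightarrow> finite {d \<in> D. t d \<notin> V}"
proof -
  obtain e e' where e: "homeomorphic_maps (onepoint_discrete D) (subtopology Z S) e e'"
    using assms homeomorphic_space_sym unfolding homeomorphic_space_def by blast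
  then have e_cont: "continuous_map (onepoint_discrete D) Z e"
    and e_inv: "\<And>u. u \<in> topspace (onepoint_discrete D) \<Longrightarrow> e' (e u) = u"
    unfolding homeomorphic_maps_def using continuous_map_in_subtopology by blast+
  have e_top: "e u \<in> topspace Z" if "u \<in> topspace (onepoint_discrete D)" for u
    using continuous_map_image_subset_topspace[OF e_cont] that by blast
  show ?thesis
  proof (rule that[of "e None" "\<lambda>d. e (Some d)"])
    show "e None \<in> topspace Z" "(\<lambda>d. e (Some d)) ` D \<subseteq> topspace Z"
      using e_top by (auto simp: topspace_onepoint_discrete)
    show "e None \<notin> (\<lambda>d. e (Some d)) ` D"
    proof
      assume "e None \<in> (\<lambda>d. e (Some d)) ` D"
      then obtain d where "d \<in> D" "e' (e None) = e' (e (Some d))"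
        by auto
      then show False
        using e_inv[of None] e_inv[of "Some d"] by (simp add: topspace_onepoint_discrete)
    qed
    fix V assume V: "openin Z V" "e None \<in> V"
    let ?U = "{u \<in> topspace (onepoint_discrete D). e u \<in> V}"
    have "openin (onepoint_discrete D) ?U"
      using e_cont V(1) by (rule openin_continuous_map_preimage)
    moreover have "None \<in> ?U"
      using V(2) by (simp add: topspace_onepoint_discrete)
    ultimately have "finite {d \<in> D. Some d \<notin> ?U}"
      unfolding openin_onepoint_discrete by blast
    moreover have "{d \<in> D. Some d \<notin> ?U} = {d \<in> D. e (Some d) \<notin> V}"
      by (auto simp: topspace_onepoint_discrete)
    ultimately show "finite {d \<in> D. e (Some d) \<notin> V}"
      by simp
  qed
qed

lemma compact_Hausdorff_separating_family:
  fixes t :: "'d \<Rightarrow> 'a"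
  assumes "compact_space Z" "Hausdorff_space Z" "\<omega> \<in> topspace Z" "t ` D \<subseteq> topspace Z" "\<omega> \<notin> t ` D"
  obtains h :: "'d \<Rightarrow> 'a \<Rightarrow> real" where
    "\<And>a. a \<in> D \<Longrightarrow> continuous_map Z euclideanreal (h a)" "\<And>a. a \<in> D \<Longrightarrow> h a \<omega> = 0"
    "\<And>a. a \<in> D \<Longrightarrow> h a (t a) = 1" "\<And>a z. a \<in> D \<Longrightarrow> z \<in> topspace Z \<Longrightarrow> 0 \<le> h a z"
proof -
  have "normal_space Z"
    using assms(1,2) by (simp add: compact_Hausdorff_or_regular_imp_normal_space)
  then have "completely_regular_space Z"
    using assms(2) by (simp add: normal_imp_completely_regular_space)
  have "t1_space Z"
    using assms(2) by (rule Hausdorff_imp_t1_space)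
  have "\<exists>g :: 'a \<Rightarrow> real. continuous_map Z (top_of_set {0..1}) g \<and> g \<omega> = 0 \<and> g ` {t a} \<subseteq> {1}"
    if "a \<in> D" for a
  proof -
    have "closedin Z {t a}"
      using \<open>t1_space Z\<close> assms(4) that by (simp add: closedin_t1_singleton image_subset_iff)
    then show ?thesis
      using \<open>completely_regular_space Z\<close> assms(3,5) that unfolding completely_regular_space_def by blast
  qed
  then have "\<forall>a\<in>D. \<exists>g :: 'a \<Rightarrow> real. continuous_map Z (top_of_set {0..1}) g \<and> g \<omega> = 0 \<and> g (t a) = 1"
    by simp
  then obtain h :: "'d \<Rightarrow> 'a \<Rightarrow> real" where h: "\<forall>a\<in>D. continuous_map Z (top_of_set {0..1}) (h a) \<and>
      h a \<omega> = 0 \<and> h a (t a) = 1"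
    by (rule bchoice[THEN exE])
  show ?thesis
  proof (rule that)
    show "continuous_map Z euclideanreal (h a)" if "a \<in> D" for a
      using h that continuous_map_in_subtopology by blast
    show "0 \<le> h a z" if "a \<in> D" "z \<in> topspace Z" for a z
      using h that continuous_map_image_subset_topspace[of Z "top_of_set {0..1}" "h a"] by auto
  qed (use h in auto)
qed

section \<open>Free triples and elementary estimates\<close>

text \<open>Uncountability is essential: on \<open>nat\<close>, \<open>F k = {..k}\<close> admits no \<open>a \<noteq> b\<close> with \<open>a \<notin> F b\<close> and
  \<open>b \<notin> F a\<close>. Below, \<open>c\<close> is taken outside \<open>B = C \<union> \<Union>(F ` C)\<close> and \<open>e\<close> moreover outside
  \<open>C' \<union> \<Union>(F ` C')\<close>; what remains is the finite condition \<open>a \<notin> F c \<union> F e\<close> on \<open>a \<in> C\<close>.\<close>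

lemma uncountable_free_triple:
  assumes D: "uncountable D" and F: "\<And>a. a \<in> D \<Longrightarrow> finite (F a)"
  shows "\<exists>a b c. a \<in> D \<and> b \<in> D \<and> c \<in> D \<and> a \<noteq> b \<and> a \<noteq> c \<and> b \<noteq> c \<and>
    (\<forall>d\<in>{a, b, c}. \<forall>d'\<in>{a, b, c}. d \<noteq> d' \<longrightarrow> d' \<notin> F d)"
proof -
  obtain C where C: "C \<subseteq> D" "countable C" "infinite C"
    using infinite_countable_subset'[OF uncountable_infinite[OF D]] by blast
  define B where "B = C \<union> (\<Union>a\<in>C. F a)"
  have "countable B"
    unfolding B_def using C F by (intro countable_Un countable_UN) (auto intro: countable_finite)
  then have "uncountable (D - B)"
    using D uncountable_minus_countable by blast
  then obtain C' where C': "C' \<subseteq> D - B" "countable C'" "infinite C'"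
    using infinite_countable_subset'[OF uncountable_infinite] by blast
  define B' where "B' = B \<union> C' \<union> (\<Union>a\<in>C'. F a)"
  have "countable B'"
    unfolding B'_def using C' F \<open>countable B\<close> by (intro countable_Un countable_UN) (auto intro: countable_finite)
  then have "uncountable (D - B')"
    using D uncountable_minus_countable by blast
  then obtain e where e: "e \<in> D" "e \<notin> B'"
    by (metis Diff_iff countable_empty ex_in_conv)
  have "infinite (C' - F e)"
    using C' F e by simp
  then obtain c where c: "c \<in> C'" "c \<notin> F e"
    by (metis Diff_iff finite.emptyI ex_in_conv)
  have "infinite (C - (F c \<union> F e))"
    using C C' F c e by auto
  then obtain a where a: "a \<in> C" "a \<notin> F c" "a \<notin> F e"
    by (metis Diff_iff UnCI finite.emptyI ex_in_conv)
  have "c \<notin> F a" "e \<notin> F a" "e \<notin> F c"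
    using a(1) c(1) e(2) C'(1) unfolding B'_def B_def by auto
  moreover have "a \<noteq> c" "a \<noteq> e" "c \<noteq> e"
    using a(1) c(1) e(2) C'(1) unfolding B'_def B_def by auto
  moreover have "a \<in> D" "c \<in> D"
    using a(1) c(1) C(1) C'(1) by auto
  ultimately show ?thesis
    using a c e by (intro exI[of _ a] exI[of _ c] exI[of _ e]) auto
qed

lemma card_le_2_eq_pair:
  assumes "finite B" "B \<noteq> {}" "card B \<le> 2"
  shows "\<exists>u v. B = {u, v}"
proof -
  have "0 < card B"
    using assms(1,2) by (simp add: card_gt_0_iff)
  then have "card B = 1 \<or> card B = 2"
    using assms(3) by linarith
  then show ?thesis
    by (auto simp: card_1_singleton_iff card_2_iff)
qed

lemma image_eq_insert_pair:
  assumes "finite A" "d \<in> A" "2 \<le> card A" "card A \<le> 3"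
  shows "\<exists>u v. f ` A = {f d, u, v} \<and> {u, v} \<subseteq> f ` (A - {d})"
proof -
  have "A - {d} \<noteq> {}"
  proof
    assume "A - {d} = {}"
    then have "card A \<le> card {d}"
      by (intro card_mono) auto
    with assms(3) show False
      by simp
  qed
  moreover have "card (f ` (A - {d})) \<le> 2"
    using card_image_le[of "A - {d}" f] assms by auto
  ultimately have "\<exists>u v. f ` (A - {d}) = {u, v}"
    using assms(1) by (intro card_le_2_eq_pair) auto
  then obtain u v where "f ` (A - {d}) = {u, v}"
    by blast
  moreover have "f ` A = insert (f d) (f ` (A - {d}))"
    using assms(2) by blast
  ultimately show ?thesis
    by auto
qed

lemma abs_sum_minus_one_le:
  fixes f :: "'d \<Rightarrow> real" and \<epsilon> :: real
  assumes "finite A" "d' \<in> A" "f d' = 1" "\<And>d. d \<in> A \<Longrightarrow> d \<noteq> d' \<Longrightarrow> \<bar>f d\<bar> \<le> \<epsilon>" "0 \<le> \<epsilon>"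
  shows "\<bar>(\<Sum>d\<in>A. f d) - 1\<bar> \<le> card A * \<epsilon>"
proof -
  have "\<bar>(\<Sum>d\<in>A. f d) - 1\<bar> = \<bar>\<Sum>d\<in>A - {d'}. f d\<bar>"
    using assms(1-3) by (simp add: sum.remove)
  also have "\<dots> \<le> (\<Sum>d\<in>A - {d'}. \<bar>f d\<bar>)"
    by (rule sum_abs)
  also have "\<dots> \<le> card (A - {d'}) * \<epsilon>"
    using assms(4) by (intro sum_bounded_above) auto
  also have "\<dots> \<le> card A * \<epsilon>"
    using assms(1,5) by (intro mult_right_mono) (auto intro: card_mono)
  finally show ?thesis .
qed

lemma norm_bump_add_le:
  fixes G t :: complex
  assumes "0 \<le> \<phi>" "\<phi> \<le> 1" "0 < M" "cmod G \<le> M" "cmod t = 1 / M" "0 \<le> \<delta>"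
    and "0 < \<phi> \<Longrightarrow> cmod G \<le> \<delta>"
  shows "cmod (complex_of_real \<phi> + t * G) \<le> 1 + \<delta> / M"
proof -
  have tG: "cmod (t * G) = cmod G / M"
    using assms(5) by (simp add: norm_mult)
  show ?thesis
  proof (cases "0 < \<phi>")
    case True
    have "cmod (complex_of_real \<phi> + t * G) \<le> \<phi> + cmod G / M"
      using norm_triangle_ineq[of "complex_of_real \<phi>" "t * G"] assms(1) tG by simp
    moreover have "cmod G / M \<le> \<delta> / M"
      using assms(3,7) True by (simp add: divide_right_mono)
    ultimately show ?thesis
      using assms(2) by linarith
  next
    case False
    then have "\<phi> = 0"
      using assms(1) by simp
    moreover have "cmod G / M \<le> 1"
      using assms(3,4) by simp
    ultimately show ?thesis
      using tG assms(3,6) by (simp add: add_increasing2)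
  qed
qed

lemma norm_pair_triple_sums:
  fixes x y z :: "'a::real_normed_field"
  assumes "norm (x + y - 1) \<le> \<delta>" "norm (y + z - 1) \<le> \<delta>" "norm (x + z - 1) \<le> \<delta>"
    and "norm (x + y + z - 1) \<le> \<delta>"
  shows "1 \<le> 5 * \<delta>"
proof -
  have triangle: "norm (a - b - c - d) \<le> norm a + norm b + norm c + norm d" for a b c d :: 'a
    using norm_triangle_ineq4[of "a - b - c" d] norm_triangle_ineq4[of "a - b" c] norm_triangle_ineq4[of a b]
    by linarith
  have "2 * (x + y + z - 1) - (x + y - 1) - (y + z - 1) - (x + z - 1) = (1::'a)"
    by (simp add: algebra_simps mult_2)
  then have "1 \<le> 2 * norm (x + y + z - 1) + norm (x + y - 1) + norm (y + z - 1) + norm (x + z - 1)"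
    using triangle[of "2 * (x + y + z - 1)" "x + y - 1" "y + z - 1" "x + z - 1"]
    by (simp only: norm_one norm_mult_numeral1)
  then show ?thesis
    using assms by linarith
qed

section \<open>Conditional expectations onto pulled-back functions\<close>

locale incl_cond_exp =
  fixes Z :: "'a topology" and n :: nat and E :: "('a \<times> 'a set \<Rightarrow> complex) \<Rightarrow> 'a \<times> 'a set \<Rightarrow> complex"
  assumes compact: "compact_space Z" and n_pos: "0 < n"
    and cond_exp: "cond_exp (incl_top Z n) (pullback_alg (incl_top Z n) (fin_subsets_top Z n) snd) E"
begin

abbreviation "X \<equiv> fin_subsets_top Z n"
abbreviation "Y \<equiv> incl_top Z n"

lemma E_add: "g \<in> cfun Y \<Longrightarrow> h \<in> cfun Y \<Longrightarrow> E (\<lambda>p. g p + h p) = (\<lambda>p. E g p + E h p)"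
  using cond_exp unfolding cond_exp_def by blast

lemma E_mult_const: "g \<in> cfun Y \<Longrightarrow> E (\<lambda>p. c * g p) = (\<lambda>p. c * E g p)"
  using cond_exp unfolding cond_exp_def by blast

lemma E_image: "E ` cfun Y = pull_snd Y ` cfun X"
  using cond_exp unfolding cond_exp_def pullback_alg_snd by blast

lemma E_range:
  assumes "g \<in> cfun Y"
  obtains f where "f \<in> cfun X" "E g = pull_snd Y f"
  using E_image assms by blast

lemma E_pull_snd:
  assumes "f \<in> cfun X"
  shows "E (pull_snd Y f) = pull_snd Y f"
proof -
  obtain g where "g \<in> cfun Y" "pull_snd Y f = E g"
    using E_image assms by (metis imageE imageI)
  moreover have "E (E g) = E g"
    using cond_exp \<open>g \<in> cfun Y\<close> unfolding cond_exp_def by blast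
  ultimately show ?thesis by simp
qed

lemma E_fibre_eq:
  assumes "g \<in> cfun Y" "(z, x) \<in> topspace Y" "(z', x) \<in> topspace Y"
  shows "E g (z, x) = E g (z', x)"
proof -
  obtain f where "E g = pull_snd Y f"
    using E_range assms(1) by blast
  then show ?thesis
    using assms by (simp add: pull_snd_def)
qed

lemma E_bounded:
  assumes "g \<in> cfun Y"
  shows "bdd_above ((\<lambda>p. cmod (E g p)) ` topspace Y)"
proof -
  obtain f where f: "f \<in> cfun X" "E g = pull_snd Y f"
    using E_range assms by blast
  obtain B where "\<And>x. x \<in> topspace X \<Longrightarrow> cmod (f x) \<le> B"
    using compact_space_bounded_continuous[OF compact_space_fin_subsets_top[OF compact], where h = f] f(1)
    unfolding cfun_def by blast
  then have "\<forall>p\<in>topspace Y. cmod (E g p) \<le> B"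
    by (auto simp: f(2) pull_snd_def topspace_incl_top)
  then show ?thesis by (auto simp: bdd_above_def)
qed

lemma E_supnorm_le_one:
  assumes "g \<in> cfun Y" "supnorm Y g \<le> 1"
  shows "supnorm Y (E g) \<le> 1"
proof -
  let ?N = "(\<lambda>g. supnorm Y (E g)) ` {g \<in> cfun Y. supnorm Y g \<le> 1}"
  have "supnorm Y (E g) \<le> Sup ?N"
    using cond_exp assms unfolding cond_exp_def by (intro cSup_upper) auto
  also have "Sup ?N = 1"
    using cond_exp unfolding cond_exp_def by blast
  finally show ?thesis .
qed

lemma E_contractive:
  assumes g: "g \<in> cfun Y" and r: "0 < r" "\<And>q. q \<in> topspace Y \<Longrightarrow> cmod (g q) \<le> r"
    and p: "p \<in> topspace Y"
  shows "cmod (E g p) \<le> r"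
proof -
  define g' where "g' = (\<lambda>q. complex_of_real (1 / r) * g q)"
  have g': "g' \<in> cfun Y"
    unfolding g'_def by (rule cfun_mult_const[OF g])
  have "supnorm Y g' \<le> 1"
    unfolding supnorm_def
  proof (rule cSup_least)
    show "(\<lambda>p. cmod (g' p)) ` topspace Y \<noteq> {}" using p by blast
  next
    fix u assume "u \<in> (\<lambda>p. cmod (g' p)) ` topspace Y"
    then obtain q where q: "q \<in> topspace Y" "u = cmod (g' q)"
      by blast
    have "cmod (g' q) = cmod (g q) / r"
      using r by (simp add: g'_def norm_mult norm_divide)
    then show "u \<le> 1"
      using q r by simp
  qed
  then have "supnorm Y (E g') \<le> 1"
    using E_supnorm_le_one g' by blast
  moreover have "cmod (E g' p) \<le> supnorm Y (E g')"
    unfolding supnorm_def using p E_bounded[OF g'] by (intro cSup_upper) auto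
  ultimately have "cmod (E g' p) \<le> 1"
    by linarith
  moreover have "E g' p = complex_of_real (1 / r) * E g p"
    by (simp only: g'_def E_mult_const[OF g])
  ultimately show ?thesis
    using r by (simp add: norm_mult norm_divide)
qed

lemma E_pull_fst_add:
  assumes "continuous_map Z euclidean h" "continuous_map Z euclidean k"
  shows "E (pull_fst Y (\<lambda>z. h z + k z)) p = E (pull_fst Y h) p + E (pull_fst Y k) p"
proof -
  have "pull_fst Y (\<lambda>z. h z + k z) = (\<lambda>p. pull_fst Y h p + pull_fst Y k p)"
    by (auto simp: pull_fst_def)
  then show ?thesis
    using E_add[OF pull_fst_cfun[OF assms(1)] pull_fst_cfun[OF assms(2)]] by simp
qed

lemma E_pull_fst_mult_const:
  assumes "continuous_map Z euclidean h"
  shows "E (pull_fst Y (\<lambda>z. c * h z)) p = c * E (pull_fst Y h) p"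
proof -
  have "pull_fst Y (\<lambda>z. c * h z) = (\<lambda>p. c * pull_fst Y h p)"
    by (auto simp: pull_fst_def)
  then show ?thesis
    using E_mult_const[OF pull_fst_cfun[OF assms]] by simp
qed

lemma E_pull_fst_sum:
  assumes "finite I" "\<And>i. i \<in> I \<Longrightarrow> continuous_map Z euclidean (h i)"
  shows "E (pull_fst Y (\<lambda>z. \<Sum>i\<in>I. h i z)) p = (\<Sum>i\<in>I. E (pull_fst Y (h i)) p)"
  using assms
proof (induction I rule: finite_induct)
  case empty
  show ?case
    using E_pull_fst_mult_const[of "\<lambda>z. 0" 0 p] by simp
next
  case (insert i I)
  have "continuous_map Z euclidean (\<lambda>z. \<Sum>j\<in>I. h j z)"
    using insert by (intro continuous_map_sum) auto
  with insert show ?case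
    by (simp add: E_pull_fst_add)
qed

lemma E_pull_fst_one:
  assumes "p \<in> topspace Y"
  shows "E (pull_fst Y (\<lambda>z. 1)) p = 1"
proof -
  define f where "f x = (if x \<in> topspace X then 1 else 0 :: complex)" for x
  have "continuous_map X euclidean f"
    by (rule continuous_map_eq[of _ _ "\<lambda>x. 1"]) (auto simp: f_def)
  then have "f \<in> cfun X"
    by (simp add: cfun_def f_def)
  moreover have "pull_fst Y (\<lambda>z. 1) = pull_snd Y f"
    by (auto simp: pull_fst_def pull_snd_def f_def topspace_incl_top)
  ultimately show ?thesis
    using E_pull_snd assms by (auto simp: pull_snd_def f_def topspace_incl_top)
qed

lemma E_pull_fst_sum_diff_one:
  assumes "finite I" "\<And>i. i \<in> I \<Longrightarrow> continuous_map Z euclidean (h i)" "p \<in> topspace Y"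
  shows "E (pull_fst Y (\<lambda>z. (\<Sum>i\<in>I. h i z) - 1)) p = (\<Sum>i\<in>I. E (pull_fst Y (h i)) p) - 1"
proof -
  have sum_h: "continuous_map Z euclidean (\<lambda>z. \<Sum>i\<in>I. h i z)"
    using assms(1,2) by (intro continuous_map_sum) auto
  have one: "continuous_map Z euclidean (\<lambda>z. 1 :: complex)"
    and neg_one: "continuous_map Z euclidean (\<lambda>z. (-1) * 1 :: complex)"
    by simp_all
  have "(\<lambda>z. (\<Sum>i\<in>I. h i z) - 1) = (\<lambda>z. (\<Sum>i\<in>I. h i z) + (-1) * 1)"
    by simp
  then have "E (pull_fst Y (\<lambda>z. (\<Sum>i\<in>I. h i z) - 1)) p
      = E (pull_fst Y (\<lambda>z. \<Sum>i\<in>I. h i z)) p + E (pull_fst Y (\<lambda>z. (-1) * 1)) p"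
    using E_pull_fst_add[OF sum_h neg_one] by simp
  also have "E (pull_fst Y (\<lambda>z. (-1) * 1)) p = - 1"
    using E_pull_fst_mult_const[OF one, of "-1" p] E_pull_fst_one[OF assms(3)] by simp
  finally show ?thesis
    using E_pull_fst_sum[OF assms(1,2)] by simp
qed

lemma E_bounded_by_bump:
  fixes \<phi> :: "'a set \<Rightarrow> real"
  assumes \<phi>: "continuous_map X euclideanreal \<phi>" "\<And>x'. x' \<in> topspace X \<Longrightarrow> 0 \<le> \<phi> x' \<and> \<phi> x' \<le> 1"
    and x: "x \<in> topspace X" "\<phi> x = 1" "z0 \<in> x"
    and G: "G \<in> cfun Y" "0 < M" "\<And>p. p \<in> topspace Y \<Longrightarrow> cmod (G p) \<le> M"
    and supp: "\<And>p. p \<in> topspace Y \<Longrightarrow> 0 < \<phi> (snd p) \<Longrightarrow> cmod (G p) \<le> \<delta>"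
  shows "cmod (E G (z0, x)) \<le> \<delta>"
proof -
  have p0: "(z0, x) \<in> topspace Y"
    using x fin_subsets_topD(1)[OF x(1)] by (auto simp: topspace_incl_top)
  then have "cmod (G (z0, x)) \<le> \<delta>"
    using supp x(2) by simp
  then have "0 \<le> \<delta>"
    using norm_ge_zero order_trans by blast
  define f where "f x' = (if x' \<in> topspace X then complex_of_real (\<phi> x') else 0)" for x'
  have f: "f \<in> cfun X"
    unfolding cfun_def f_def by (auto intro: continuous_map_eq[OF continuous_map_of_real[OF \<phi>(1)]])
  define c where "c = E G (z0, x)"
  show ?thesis
  proof (cases "c = 0")
    case True
    with \<open>0 \<le> \<delta>\<close> show ?thesis by (simp add: c_def)
  next
    case False
    txt \<open>Test contractivity on \<open>\<phi> \<circ> snd + t G\<close> with \<open>t c = |c| / M\<close>: since \<open>E\<close> fixes \<open>\<phi> \<circ> snd\<close> and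
      \<open>\<phi> x = 1\<close>, this yields \<open>1 + |c| / M \<le> 1 + \<delta> / M\<close>.\<close>
    define t where "t = cnj c / complex_of_real (M * cmod c)"
    have "t * c = complex_of_real (cmod c / M)"
      using False \<open>0 < M\<close> complex_norm_square[of c]
      by (simp add: t_def field_simps power2_eq_square mult.commute)
    define g where "g p = pull_snd Y f p + t * G p" for p
    have "E g = (\<lambda>p. pull_snd Y f p + t * E G p)"
      unfolding g_def using E_add[OF pull_snd_cfun[OF f] cfun_mult_const[OF G(1)]] E_mult_const[OF G(1)]
        E_pull_snd[OF f] by simp
    then have "E g (z0, x) = complex_of_real (1 + cmod c / M)"
      using p0 x \<open>t * c = _\<close> by (simp add: pull_snd_def f_def c_def)
    moreover have "cmod (E g (z0, x)) \<le> 1 + \<delta> / M"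
    proof (rule E_contractive)
      show "g \<in> cfun Y"
        unfolding g_def by (intro cfun_add pull_snd_cfun f cfun_mult_const G(1))
      show "0 < 1 + \<delta> / M"
        using \<open>0 \<le> \<delta>\<close> \<open>0 < M\<close> by (simp add: add_pos_nonneg)
      fix q assume q: "q \<in> topspace Y"
      then have "snd q \<in> topspace X"
        by (auto simp: topspace_incl_top)
      then have "g q = complex_of_real (\<phi> (snd q)) + t * G q"
        using q by (simp add: g_def pull_snd_def f_def)
      moreover have "cmod t = 1 / M"
        using False \<open>0 < M\<close> by (simp add: t_def norm_divide norm_mult)
      ultimately show "cmod (g q) \<le> 1 + \<delta> / M"
        using \<phi>(2)[OF \<open>snd q \<in> topspace X\<close>] G(2) G(3)[OF q] \<open>0 \<le> \<delta>\<close> supp[OF q]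
        by (simp add: norm_bump_add_le)
    qed (rule p0)
    moreover have "cmod (complex_of_real (1 + cmod c / M)) = 1 + cmod c / M"
      using \<open>0 < M\<close> by (simp only: norm_of_real) simp
    ultimately have "1 + cmod c / M \<le> 1 + \<delta> / M"
      by metis
    then show ?thesis
      using \<open>0 < M\<close> by (simp add: c_def divide_le_cancel)
  qed
qed

lemma E_local:
  assumes h: "continuous_map Z euclidean h" and x: "x \<in> topspace X" "z0 \<in> x"
  shows "cmod (E (pull_fst Y h) (z0, x)) \<le> Max ((\<lambda>z. cmod (h z)) ` x)"
proof (rule dense_ge)
  fix \<delta> assume "Max ((\<lambda>z. cmod (h z)) ` x) < \<delta>"
  then have "\<And>z. z \<in> x \<Longrightarrow> cmod (h z) < \<delta>"
    using fin_subsets_topD[OF x(1)] n_pos by simp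
  then obtain \<phi> where \<phi>: "continuous_map X euclideanreal \<phi>" "\<And>x'. x' \<in> topspace X \<Longrightarrow> 0 \<le> \<phi> x' \<and> \<phi> x' \<le> 1"
    "\<phi> x = 1" "\<And>x' z. x' \<in> topspace X \<Longrightarrow> 0 < \<phi> x' \<Longrightarrow> z \<in> x' \<Longrightarrow> cmod (h z) < \<delta>"
    using fin_subsets_top_bump[OF n_pos h x(1)] by blast
  obtain M where M: "0 < M" "\<And>z. z \<in> topspace Z \<Longrightarrow> cmod (h z) \<le> M"
    using compact_space_bounded_continuous[OF compact h] by blast
  show "cmod (E (pull_fst Y h) (z0, x)) \<le> \<delta>"
  proof (rule E_bounded_by_bump[OF \<phi>(1,2) x(1) \<phi>(3) x(2) pull_fst_cfun[OF h] M(1)])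
    show "cmod (pull_fst Y h p) \<le> M" if "p \<in> topspace Y" for p
      using that M by (auto simp: pull_fst_def topspace_incl_top)
    show "cmod (pull_fst Y h p) \<le> \<delta>" if "p \<in> topspace Y" "0 < \<phi> (snd p)" for p
      using that \<phi>(4)[of "snd p" "fst p"] by (auto simp: pull_fst_def topspace_incl_top less_imp_le)
  qed
qed

lemma E_sum_near_one:
  fixes h :: "'d \<Rightarrow> 'a \<Rightarrow> real" and t :: "'d \<Rightarrow> 'a" and \<epsilon> :: real
  assumes A: "finite A" "A \<noteq> {}" "card A \<le> n" "t ` A \<subseteq> topspace Z"
    and h: "\<And>d. d \<in> A \<Longrightarrow> continuous_map Z euclideanreal (h d)" "\<And>d. d \<in> A \<Longrightarrow> h d (t d) = 1"
    and small: "\<And>d d'. d \<in> A \<Longrightarrow> d' \<in> A \<Longrightarrow> d \<noteq> d' \<Longrightarrow> \<bar>h d (t d')\<bar> \<le> \<epsilon>"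
    and close: "\<And>d. d \<in> A \<Longrightarrow> cmod (E (pull_fst Y (\<lambda>z. of_real (h d z))) (t d, t ` A) - p d) \<le> \<epsilon>"
  shows "cmod ((\<Sum>d\<in>A. p d) - 1) \<le> 2 * real (card A) * \<epsilon>"
proof -
  let ?x = "t ` A"
  let ?H = "\<lambda>d z. of_real (h d z) :: complex"
  let ?k = "\<lambda>z. (\<Sum>d\<in>A. ?H d z) - 1"
  let ?e = "\<lambda>d. E (pull_fst Y (?H d)) (t d, ?x)"
  obtain d0 where d0: "d0 \<in> A"
    using A(2) by blast
  have x: "?x \<in> topspace X"
    using A card_image_le[OF A(1), of t] by (intro in_fin_subsets_top) auto
  then have p0: "(t d, ?x) \<in> topspace Y" if "d \<in> A" for d
    using that fin_subsets_topD(1)[OF x] by (auto simp: topspace_incl_top)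
  have H: "continuous_map Z euclidean (?H d)" if "d \<in> A" for d
    using h(1)[OF that] by (rule continuous_map_of_real)
  have \<epsilon>: "0 \<le> \<epsilon>"
    using close[OF d0] norm_ge_zero order_trans by blast
  have k_max: "cmod (?k z) \<le> card A * \<epsilon>" if "z \<in> ?x" for z
  proof -
    obtain d' where d': "d' \<in> A" "z = t d'"
      using \<open>z \<in> ?x\<close> by blast
    have "?k (t d') = of_real ((\<Sum>d\<in>A. h d (t d')) - 1)"
      by simp
    then have "cmod (?k z) = \<bar>(\<Sum>d\<in>A. h d (t d')) - 1\<bar>"
      by (simp only: d'(2) norm_of_real)
    also have "\<dots> \<le> card A * \<epsilon>"
      by (rule abs_sum_minus_one_le[OF A(1) d'(1)]) (use h(2) small d'(1) \<epsilon> in auto)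
    finally show ?thesis .
  qed
  have "continuous_map Z euclidean ?k"
    using A(1) H by (intro continuous_map_diff continuous_map_sum) auto
  then have "cmod (E (pull_fst Y ?k) (t d0, ?x)) \<le> Max ((\<lambda>z. cmod (?k z)) ` ?x)"
    using x d0 by (intro E_local) auto
  also have "\<dots> \<le> card A * \<epsilon>"
    using A(1,2) k_max by (subst Max_le_iff) auto
  also have "E (pull_fst Y ?k) (t d0, ?x) = (\<Sum>d\<in>A. E (pull_fst Y (?H d)) (t d0, ?x)) - 1"
    by (rule E_pull_fst_sum_diff_one[OF A(1) H p0[OF d0]])
  also have "(\<Sum>d\<in>A. E (pull_fst Y (?H d)) (t d0, ?x)) = (\<Sum>d\<in>A. ?e d)"
    using E_fibre_eq[OF pull_fst_cfun[OF H] p0[OF d0] p0] by (intro sum.cong) auto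
  finally have near_one: "cmod ((\<Sum>d\<in>A. ?e d) - 1) \<le> card A * \<epsilon>" .
  have "cmod (\<Sum>d\<in>A. ?e d - p d) \<le> (\<Sum>d\<in>A. cmod (?e d - p d))"
    by (rule sum_norm_le) simp
  also have "\<dots> \<le> card A * \<epsilon>"
    using close by (rule sum_bounded_above)
  finally have "cmod (\<Sum>d\<in>A. ?e d - p d) \<le> card A * \<epsilon>" .
  moreover have split: "(\<Sum>d\<in>A. p d) - 1 = ((\<Sum>d\<in>A. ?e d) - 1) - (\<Sum>d\<in>A. ?e d - p d)"
    by (simp add: sum_subtractf)
  have "cmod ((\<Sum>d\<in>A. p d) - 1) \<le> cmod ((\<Sum>d\<in>A. ?e d) - 1) + cmod (\<Sum>d\<in>A. ?e d - p d)"
    unfolding split by (rule norm_triangle_ineq4)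
  ultimately show ?thesis
    using near_one by linarith
qed

lemma E_sum_near_one_of_neighbourhoods:
  fixes h :: "'d \<Rightarrow> 'a \<Rightarrow> real" and t :: "'d \<Rightarrow> 'a" and W :: "'d \<Rightarrow> 'a set" and \<epsilon> :: real
  assumes A: "finite A" "2 \<le> card A" "card A \<le> 3" "3 \<le> n" "t ` A \<subseteq> topspace Z" "0 \<le> \<epsilon>"
    and h: "\<And>d. d \<in> A \<Longrightarrow> continuous_map Z euclideanreal (h d)" "\<And>d. d \<in> A \<Longrightarrow> h d (t d) = 1"
      "\<And>d z. d \<in> A \<Longrightarrow> z \<in> topspace Z \<Longrightarrow> 0 \<le> h d z"
    and W: "\<And>d d'. d \<in> A \<Longrightarrow> d' \<in> A \<Longrightarrow> d \<noteq> d' \<Longrightarrow> t d' \<in> W d"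
      "\<And>d u. d \<in> A \<Longrightarrow> u \<in> W d \<Longrightarrow> h d u < \<epsilon>"
      "\<And>d u v. d \<in> A \<Longrightarrow> u \<in> W d \<Longrightarrow> v \<in> W d \<Longrightarrow>
         cmod (E (pull_fst Y (\<lambda>z. of_real (h d z))) (t d, {t d, u, v}) - p d) < \<epsilon>"
  shows "cmod ((\<Sum>d\<in>A. p d) - 1) \<le> 6 * \<epsilon>"
proof -
  have close: "cmod (E (pull_fst Y (\<lambda>z. of_real (h d z))) (t d, t ` A) - p d) \<le> \<epsilon>" if d: "d \<in> A" for d
  proof -
    from image_eq_insert_pair[OF A(1) d A(2,3), of t]
    obtain u v where uv: "t ` A = {t d, u, v}" "{u, v} \<subseteq> t ` (A - {d})"
      by (elim exE conjE)
    have "t ` (A - {d}) \<subseteq> W d"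
    proof
      fix y assume "y \<in> t ` (A - {d})"
      then obtain d' where "d' \<in> A" "d' \<noteq> d" "y = t d'"
        by auto
      then show "y \<in> W d"
        using W(1)[OF d] by auto
    qed
    with uv(2) have "cmod (E (pull_fst Y (\<lambda>z. of_real (h d z))) (t d, {t d, u, v}) - p d) < \<epsilon>"
      by (intro W(3)[OF d]) auto
    then show ?thesis
      unfolding uv(1) by (rule less_imp_le)
  qed
  have "cmod ((\<Sum>d\<in>A. p d) - 1) \<le> 2 * real (card A) * \<epsilon>"
  proof (rule E_sum_near_one[where h = h and t = t, OF A(1) _ _ A(5) h(1,2) _ close])
    show "A \<noteq> {}" "card A \<le> n"
      using A(2-4) by auto
    show "\<bar>h d (t d')\<bar> \<le> \<epsilon>" if "d \<in> A" "d' \<in> A" "d \<noteq> d'" for d d'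
      using W(1,2)[OF that(1)] h(3)[OF that(1)] A(5) that by (simp add: image_subset_iff less_imp_le)
  qed
  also have "\<dots> \<le> 6 * \<epsilon>"
    using A(3,6) by (simp add: mult_right_mono)
  finally show ?thesis .
qed

lemma continuous_map_E_insert_pair:
  assumes "g \<in> cfun Y" "3 \<le> n" "u0 \<in> topspace Z"
  shows "continuous_map (prod_topology Z Z) euclidean (\<lambda>(u, v). E g (u0, {u0, u, v}))"
proof -
  obtain f where f: "f \<in> cfun X" "E g = pull_snd Y f"
    using E_range assms(1) by blast
  have ins: "continuous_map (prod_topology Z Z) X (\<lambda>(u, v). {u0, u, v})"
    by (rule continuous_map_insert_pair_fin_subsets_top[OF assms(2,3)])
  then have "continuous_map (prod_topology Z Z) euclidean (f \<circ> (\<lambda>(u, v). {u0, u, v}))"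
    using f(1) by (auto simp: cfun_def intro: continuous_map_compose)
  then show ?thesis
  proof (rule continuous_map_eq)
    fix w assume "w \<in> topspace (prod_topology Z Z)"
    then have "(case w of (u, v) \<Rightarrow> {u0, u, v}) \<in> topspace X"
      using continuous_map_image_subset_topspace[OF ins] by blast
    then show "(f \<circ> (\<lambda>(u, v). {u0, u, v})) w = (case w of (u, v) \<Rightarrow> E g (u0, {u0, u, v}))"
      using assms(3) by (auto simp: f(2) pull_snd_def topspace_incl_top split: prod.splits)
  qed
qed

lemma E_near_limit_family:
  fixes t :: "'d \<Rightarrow> 'a" and h :: "'d \<Rightarrow> 'a \<Rightarrow> real"
  assumes "3 \<le> n" "\<omega> \<in> topspace Z" "t ` D \<subseteq> topspace Z" "0 < \<epsilon>"
    and h: "\<And>a. a \<in> D \<Longrightarrow> continuous_map Z euclideanreal (h a)" "\<And>a. a \<in> D \<Longrightarrow> h a \<omega> = 0"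
  obtains W where "\<And>a. a \<in> D \<Longrightarrow> openin Z (W a)" "\<And>a. a \<in> D \<Longrightarrow> \<omega> \<in> W a"
    "\<And>a u. a \<in> D \<Longrightarrow> u \<in> W a \<Longrightarrow> h a u < \<epsilon>"
    "\<And>a u v. a \<in> D \<Longrightarrow> u \<in> W a \<Longrightarrow> v \<in> W a \<Longrightarrow>
       cmod (E (pull_fst Y (\<lambda>z. of_real (h a z))) (t a, {t a, u, v})
         - E (pull_fst Y (\<lambda>z. of_real (h a z))) (t a, {t a, \<omega>})) < \<epsilon>"
proof -
  let ?E = "\<lambda>a x. E (pull_fst Y (\<lambda>z. of_real (h a z))) (t a, x)"
  have "\<exists>W. openin Z W \<and> \<omega> \<in> W \<and> (\<forall>u\<in>W. h a u < \<epsilon>) \<and>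
      (\<forall>u\<in>W. \<forall>v\<in>W. cmod (?E a {t a, u, v} - ?E a {t a, \<omega>}) < \<epsilon>)" if a: "a \<in> D" for a
  proof -
    let ?\<Phi> = "\<lambda>(u, v). ?E a {t a, u, v}"
    have "continuous_map (prod_topology Z Z) euclidean ?\<Phi>"
      using assms a by (intro continuous_map_E_insert_pair pull_fst_cfun continuous_map_of_real) auto
    from this assms(2,4) obtain W1 where W1: "openin Z W1" "\<omega> \<in> W1"
      "\<And>u v. u \<in> W1 \<Longrightarrow> v \<in> W1 \<Longrightarrow> dist (?\<Phi> (u, v)) (?\<Phi> (\<omega>, \<omega>)) < \<epsilon>"
      by (rule continuous_map_prod_near_diagonal) blast
    define W2 where "W2 = {z \<in> topspace Z. h a z \<in> {..<\<epsilon>}}"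
    have "openin Z W2"
      unfolding W2_def using h(1)[OF a] by (rule openin_continuous_map_preimage) simp
    moreover have "\<omega> \<in> W2"
      using h(2)[OF a] assms(2,4) by (simp add: W2_def)
    ultimately show ?thesis
      using W1 by (intro exI[of _ "W1 \<inter> W2"]) (auto simp: W2_def dist_norm)
  qed
  then have "\<forall>a\<in>D. \<exists>W. openin Z W \<and> \<omega> \<in> W \<and> (\<forall>u\<in>W. h a u < \<epsilon>) \<and>
      (\<forall>u\<in>W. \<forall>v\<in>W. cmod (?E a {t a, u, v} - ?E a {t a, \<omega>}) < \<epsilon>)"
    by blast
  then obtain W where W: "\<forall>a\<in>D. openin Z (W a) \<and> \<omega> \<in> W a \<and> (\<forall>u\<in>W a. h a u < \<epsilon>) \<and>
      (\<forall>u\<in>W a. \<forall>v\<in>W a. cmod (?E a {t a, u, v} - ?E a {t a, \<omega>}) < \<epsilon>)"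
    by (rule bchoice[THEN exE])
  show ?thesis
    by (rule that[of W]) (use W in blast)+
qed

lemma no_uncountable_convergent_family:
  fixes t :: "'d \<Rightarrow> 'a"
  assumes n: "3 \<le> n" and Hausdorff: "Hausdorff_space Z" and D: "uncountable D"
    and \<omega>: "\<omega> \<in> topspace Z" "t ` D \<subseteq> topspace Z" "\<omega> \<notin> t ` D"
    and conv: "\<And>V. openin Z V \<Longrightarrow> \<omega> \<in> V \<Longrightarrow> finite {d \<in> D. t d \<notin> V}"
  shows False
proof -
  obtain h :: "'d \<Rightarrow> 'a \<Rightarrow> real" where h_cont: "\<And>a. a \<in> D \<Longrightarrow> continuous_map Z euclideanreal (h a)"
    and h_\<omega>: "\<And>a. a \<in> D \<Longrightarrow> h a \<omega> = 0" and h_one: "\<And>a. a \<in> D \<Longrightarrow> h a (t a) = 1"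
    and h_nonneg: "\<And>a z. a \<in> D \<Longrightarrow> z \<in> topspace Z \<Longrightarrow> 0 \<le> h a z"
    using compact_Hausdorff_separating_family[OF compact Hausdorff \<omega>] by blast
  define \<epsilon> :: real where "\<epsilon> = 1 / 50"
  define p where "p a = E (pull_fst Y (\<lambda>z. of_real (h a z))) (t a, {t a, \<omega>})" for a
  obtain W where W_open: "\<And>a. a \<in> D \<Longrightarrow> openin Z (W a)" and W_\<omega>: "\<And>a. a \<in> D \<Longrightarrow> \<omega> \<in> W a"
    and W_small: "\<And>a u. a \<in> D \<Longrightarrow> u \<in> W a \<Longrightarrow> h a u < \<epsilon>"
    and W_close: "\<And>a u v. a \<in> D \<Longrightarrow> u \<in> W a \<Longrightarrow> v \<in> W a \<Longrightarrow>
       cmod (E (pull_fst Y (\<lambda>z. of_real (h a z))) (t a, {t a, u, v}) - p a) < \<epsilon>"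
    unfolding p_def using E_near_limit_family[OF n \<omega>(1,2), of \<epsilon> h] h_cont h_\<omega> by (auto simp: \<epsilon>_def)
  have "finite {e \<in> D. t e \<notin> W d}" if "d \<in> D" for d
    using conv W_open W_\<omega> that by blast
  from uncountable_free_triple[OF D, of "\<lambda>d. {e \<in> D. t e \<notin> W d}", OF this]
  obtain a b c where abc: "a \<in> D" "b \<in> D" "c \<in> D" "a \<noteq> b" "a \<noteq> c" "b \<noteq> c"
    and free: "\<forall>d\<in>{a, b, c}. \<forall>d'\<in>{a, b, c}. d \<noteq> d' \<longrightarrow> d' \<notin> {e \<in> D. t e \<notin> W d}"
    by blast
  have near: "t d' \<in> W d" if "d \<in> {a, b, c}" "d' \<in> {a, b, c}" "d \<noteq> d'" for d d'
    using free that abc by blast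
  have sum_near: "cmod ((\<Sum>d\<in>A. p d) - 1) \<le> 6 * \<epsilon>" if A: "A \<subseteq> {a, b, c}" "2 \<le> card A" for A
  proof -
    have "finite A" "A \<subseteq> D" "card A \<le> 3"
      using A(1) abc finite_subset card_mono[OF _ A(1)] by auto
    show ?thesis
    proof (rule E_sum_near_one_of_neighbourhoods[OF \<open>finite A\<close> A(2) \<open>card A \<le> 3\<close> n])
      show "t ` A \<subseteq> topspace Z" "0 \<le> \<epsilon>"
        using \<open>A \<subseteq> D\<close> \<omega>(2) by (auto simp: \<epsilon>_def)
      show "continuous_map Z euclideanreal (h d)" "h d (t d) = 1" if "d \<in> A" for d
        using h_cont h_one that \<open>A \<subseteq> D\<close> by auto
      show "0 \<le> h d z" if "d \<in> A" "z \<in> topspace Z" for d z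
        using h_nonneg that \<open>A \<subseteq> D\<close> by auto
      show "t d' \<in> W d" if "d \<in> A" "d' \<in> A" "d \<noteq> d'" for d d'
        by (rule near) (use that A(1) in auto)
      show "h d u < \<epsilon>" if "d \<in> A" "u \<in> W d" for d u
        using W_small that \<open>A \<subseteq> D\<close> by auto
      show "cmod (E (pull_fst Y (\<lambda>z. of_real (h d z))) (t d, {t d, u, v}) - p d) < \<epsilon>"
        if "d \<in> A" "u \<in> W d" "v \<in> W d" for d u v
        using W_close that \<open>A \<subseteq> D\<close> by auto
    qed
  qed
  have "(\<Sum>d\<in>{a, b}. p d) = p a + p b" "(\<Sum>d\<in>{b, c}. p d) = p b + p c"
    "(\<Sum>d\<in>{a, c}. p d) = p a + p c" "(\<Sum>d\<in>{a, b, c}. p d) = p a + p b + p c"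
    using abc by (simp_all add: add.assoc)
  moreover have "card {a, b} = 2" "card {b, c} = 2" "card {a, c} = 2" "card {a, b, c} = 3"
    using abc by simp_all
  ultimately have "1 \<le> 5 * (6 * \<epsilon>)"
    using sum_near[of "{a, b}"] sum_near[of "{b, c}"] sum_near[of "{a, c}"] sum_near[of "{a, b, c}"]
    by (intro norm_pair_triple_sums[of "p a" "p b" _ "p c"]) auto
  then show False
    by (simp add: \<epsilon>_def)
qed

end

theorem mainTheorem2:
  fixes Z :: "'a topology" and D :: "'d set" and n :: nat
  assumes "compact_space Z" and "Hausdorff_space Z"
    and "uncountable D"
    and "\<exists>S. S \<subseteq> topspace Z \<and> subtopology Z S homeomorphic_space onepoint_discrete D"
    and "n \<ge> 3"
  shows "\<not> (\<exists>E. cond_exp (incl_top Z n) (pullback_alg (incl_top Z n) (fin_subsets_top Z n) snd) E)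
         \<and> \<not> quantum_branched_cover (incl_top Z n) (pullback_alg (incl_top Z n) (fin_subsets_top Z n) snd)"
proof -
  obtain S where "subtopology Z S homeomorphic_space onepoint_discrete D"
    using assms(4) by blast
  then obtain t \<omega> where \<omega>: "\<omega> \<in> topspace Z" "t ` D \<subseteq> topspace Z" "\<omega> \<notin> t ` D"
    and conv: "\<And>V. openin Z V \<Longrightarrow> \<omega> \<in> V \<Longrightarrow> finite {d \<in> D. t d \<notin> V}"
    by (rule homeomorphic_onepoint_discreteE) blast
  have "\<not> (\<exists>E. cond_exp (incl_top Z n) (pullback_alg (incl_top Z n) (fin_subsets_top Z n) snd) E)"
  proof
    assume "\<exists>E. cond_exp (incl_top Z n) (pullback_alg (incl_top Z n) (fin_subsets_top Z n) snd) E"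
    then obtain E where "cond_exp (incl_top Z n) (pullback_alg (incl_top Z n) (fin_subsets_top Z n) snd) E"
      by blast
    then interpret incl_cond_exp Z n E
      using assms(1,5) by unfold_locales auto
    show False
      by (rule no_uncountable_convergent_family[OF assms(5,2,3) \<omega> conv])
  qed
  then show ?thesis
    unfolding quantum_branched_cover_def by blast
qed

end
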